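(* For $n\ge0$ let $A_n=\sum_{r=0}^n n!/r!$. A prime $p$ satisfies $0!-1!+2!-3!+\cdots+(-1)^{p-1}(p-1)!\equiv 0\pmod p$ if and only if $p$ divides $A_{p-1}$. *)

theory Defs
  imports "HOL-Computational_Algebra.Primes"
begin

text \<open>A_n = sum_{r=0}^n n!/r!; each term is an integer since r <= n, so nat division is exact.\<close>
definition A :: "nat \<Rightarrow> nat" where
  "A n = (\<Sum>r=0..n. fact n div fact r)"

end

theory Submission
  imports Defs "HOL-Number_Theory.Cong"
begin

text \<open>Modulo \<open>p\<close> each factor \<open>p - j\<close> of \<open>(p-1)!/r!\<close> is \<open>-j\<close>, so
  \<open>(p-1)!/r! \<equiv> (-1)^(p-1-r) (p-1-r)!\<close>; summing over \<open>r\<close> and reversing the order of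
  summation turns \<open>A (p-1)\<close> into the alternating factorial sum.\<close>

lemma prod_top_factors_cong:
  fixes m n :: nat
  assumes "m \<le> n"
  shows "[int (\<Prod>{n-m..<n}) = (-1)^m * fact m] (mod int n)"
  using assms
proof (induction m)
  case 0
  then show ?case by simp
next
  case (Suc m)
  have IH: "[int (\<Prod>{n-m..<n}) = (-1)^m * fact m] (mod int n)"
    using Suc by simp
  have "{n - Suc m..<n} = insert (n - Suc m) {n-m..<n}"
    using Suc.prems by auto
  then have "int (\<Prod>{n - Suc m..<n}) = int (n - Suc m) * int (\<Prod>{n-m..<n})"
    using Suc.prems by simp
  moreover have "[int (n - Suc m) = - int (Suc m)] (mod int n)"
    using Suc.prems by (simp add: cong_iff_dvd_diff of_nat_diff)
  ultimately have "[int (\<Prod>{n - Suc m..<n}) = - int (Suc m) * ((-1)^m * fact m)] (mod int n)"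
    using IH by (simp add: cong_mult)
  then show ?case
    by (simp add: fact_Suc algebra_simps)
qed

lemma fact_div_fact_cong:
  fixes n r :: nat
  assumes "r \<le> n"
  shows "[int (fact n div fact r) = (-1)^(n-r) * fact (n-r)] (mod int (Suc n))"
proof -
  have "fact n div fact r = \<Prod>{Suc n - (n-r)..<Suc n}"
    using assms by (simp add: fact_div_fact atLeastLessThanSuc_atLeastAtMost)
  then show ?thesis
    using prod_top_factors_cong[of "n-r" "Suc n"] by simp
qed

lemma A_cong_alternating_fact_sum:
  "[int (A n) = (\<Sum>k=0..n. (-1::int)^k * fact k)] (mod int (Suc n))"
proof -
  have "int (A n) = (\<Sum>r=0..n. int (fact n div fact r))"
    by (simp add: A_def)
  also have "[\<dots> = (\<Sum>r=0..n. (-1::int)^(n-r) * fact (n-r))] (mod int (Suc n))"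
    by (intro cong_sum fact_div_fact_cong) simp
  also have "(\<Sum>r=0..n. (-1::int)^(n-r) * fact (n-r)) = (\<Sum>k=0..n. (-1::int)^k * fact k)"
    using sum.atLeastAtMost_rev[of "\<lambda>k. (-1::int)^k * fact k" 0 n] by simp
  finally show ?thesis .
qed

theorem lemma5p2:
  fixes p :: nat
  assumes "prime p"
  shows "int p dvd (\<Sum>k=0..p-1. (-1::int)^k * fact k) \<longleftrightarrow> p dvd A (p - 1)"
proof -
  have "Suc (p - 1) = p"
    using assms prime_gt_0_nat by simp
  then have "[int (A (p-1)) = (\<Sum>k=0..p-1. (-1::int)^k * fact k)] (mod int p)"
    using A_cong_alternating_fact_sum[of "p-1"] by simp
  then have "int p dvd int (A (p-1)) \<longleftrightarrow> int p dvd (\<Sum>k=0..p-1. (-1::int)^k * fact k)"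
    using cong_dvd_iff by blast
  then show ?thesis
    by simp
qed

end
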